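(* For all $\theta\in\mathbb R$ and $\ell>0$ the function $a\mapsto R(\theta,a,\ell)$ is strictly decreasing on $(0,\infty)$. Moreover, for any $C_0\ge1$ there is a constant $C=C(C_0)\ge1$ such that for all $(\theta,a,\ell)\in\mathbb R\times(0,\infty)^2$ $$\max_{\alpha\in[a/C_0,C_0a]}|\partial_aR(\theta,\alpha,\ell)|\le C\min_{\alpha\in[a/C_0,C_0a]}|\partial_aR(\theta,\alpha,\ell)|.$$
   Context: Fix $m>0$. For $a,\ell>0$: $\kappa(a,\ell)=(1+4a^2\ell/m^2)^{-1/2}$, $p(a,\ell)=\frac{m}{2a^2\kappa(a,\ell)}$. For $\kappa\in(0,1)$, $G_\kappa(x)=\sqrt{x^2-1}-\kappa\ln(x+\sqrt{x^2-1})$ on $[1,\infty)$ and $H_\kappa=G_\kappa^{-1}:[0,\infty)\to[1,\infty)$. $R(\theta,a,\ell)=p(a,\ell)H_{\kappa(a,\ell)}(|\theta|/p(a,\ell))-p(a,\ell)\kappa(a,\ell)$, a smooth function on $\mathbb R\times(0,\infty)^2$. *)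

theory Defs
  imports "HOL-Analysis.Analysis"
begin

text \<open>The fixed parameter m > 0 is an explicit argument of kappa, p and R.\<close>

definition kappa :: "real \<Rightarrow> real \<Rightarrow> real \<Rightarrow> real" where
  "kappa m a l = 1 / sqrt (1 + 4 * a^2 * l / m^2)"

definition pfun :: "real \<Rightarrow> real \<Rightarrow> real \<Rightarrow> real" where
  "pfun m a l = m / (2 * a^2 * kappa m a l)"

definition Gk :: "real \<Rightarrow> real \<Rightarrow> real" where
  "Gk k x = sqrt (x^2 - 1) - k * ln (x + sqrt (x^2 - 1))"

definition Hk :: "real \<Rightarrow> real \<Rightarrow> real" where
  "Hk k y = the_inv_into {1..} (Gk k) y"

definition Rfun :: "real \<Rightarrow> real \<Rightarrow> real \<Rightarrow> real \<Rightarrow> real" where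
  "Rfun m \<theta> a l = pfun m a l * Hk (kappa m a l) (\<bar>\<theta>\<bar> / pfun m a l) - pfun m a l * kappa m a l"

end

(*
  H_kappa(y) = cosh T, where T >= 0 solves Phi_kappa(T) = sinh T - kappa T = y. Hence
  R = p cosh T - b with b = p kappa = m / (2 a^2), where T = T(a) >= 0 solves
  p sinh T - b T = |theta|. Implicit differentiation in a gives dR/da = -(p/a) Q_kappa(T), with
  Q_kappa(t) = P_kappa(t) / (cosh t - kappa) and
  P_kappa(t) = 1 + 3 kappa^2 + 2 kappa t sinh t - kappa (3 + kappa^2) cosh t > 0,
  so R is strictly decreasing in a. When a changes by a factor K >= 1, the quantities p/a,
  kappa and 1 - kappa change by factors bounded by powers of K, and Phi_kappa(T) by at most K^2.
  The log-derivative bounds (log P_kappa)' <= 8 (log Phi_kappa)' and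
  (log (cosh - kappa))' <= (log Phi_kappa)' turn the latter into a bounded change of Q_kappa(T);
  they reduce to elementary inequalities between t, sinh t and cosh t.
*)

theory Submission
  imports Defs
begin

section \<open>Elementary hyperbolic inequalities\<close>

lemma nonneg_if_deriv_nonneg:
  fixes f f' :: "real \<Rightarrow> real"
  assumes "\<And>x. x \<ge> 0 \<Longrightarrow> (f has_real_derivative f' x) (at x)"
    and "\<And>x. x \<ge> 0 \<Longrightarrow> f' x \<ge> 0" and "f 0 \<ge> 0" and "t \<ge> 0"
  shows "f t \<ge> 0"
  using DERIV_nonneg_imp_nondecreasing[of 0 t f] assms by fastforce

lemma sinh_ge_self:
  fixes t :: real
  assumes "t \<ge> 0"
  shows "t \<le> sinh t"
proof -
  have "0 \<le> sinh t - t"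
    by (rule nonneg_if_deriv_nonneg[of "\<lambda>t. sinh t - t" "\<lambda>t. cosh t - 1"])
      (auto intro!: derivative_eq_intros simp: cosh_real_ge_1 assms)
  then show ?thesis by simp
qed

lemma sinh_le_mult_cosh:
  fixes t :: real
  assumes "t \<ge> 0"
  shows "sinh t \<le> t * cosh t"
proof -
  have "0 \<le> t * cosh t - sinh t"
    by (rule nonneg_if_deriv_nonneg[of "\<lambda>t. t * cosh t - sinh t" "\<lambda>t. t * sinh t"])
      (auto intro!: derivative_eq_intros simp: assms)
  then show ?thesis by simp
qed

lemma cosh_minus_one_le_mult_sinh:
  fixes t :: real
  assumes "t \<ge> 0"
  shows "2 * (cosh t - 1) \<le> t * sinh t"
proof -
  have "0 \<le> t * sinh t - 2 * cosh t + 2"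
    by (rule nonneg_if_deriv_nonneg[of "\<lambda>t. t * sinh t - 2 * cosh t + 2"
          "\<lambda>t. t * cosh t - sinh t"])
      (auto intro!: derivative_eq_intros simp: sinh_le_mult_cosh assms)
  then show ?thesis by simp
qed

lemma mult_sinh_minus_self_le:
  fixes t :: real
  assumes "t \<ge> 0"
  shows "t * (sinh t - t) \<le> 8 * (t * sinh t - 2 * cosh t + 2)"
proof -
  define f0 f1 f2 :: "real \<Rightarrow> real"
    where "f0 = (\<lambda>t. 7 * t * sinh t - 16 * cosh t + 16 + t\<^sup>2)"
      and "f1 = (\<lambda>t. 7 * t * cosh t - 9 * sinh t + 2 * t)"
      and "f2 = (\<lambda>t. 7 * t * sinh t - 2 * cosh t + 2)"
  have "(f0 has_real_derivative f1 x) (at x)" "(f1 has_real_derivative f2 x) (at x)" for x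
    unfolding f0_def f1_def f2_def by (auto intro!: derivative_eq_intros)
  moreover have "f0 0 = 0" "f1 0 = 0" by (simp_all add: f0_def f1_def)
  moreover have "0 \<le> f2 x" if "0 \<le> x" for x
  proof -
    have "0 \<le> 6 * (x * sinh x)" using that by simp
    then show ?thesis
      using cosh_minus_one_le_mult_sinh[OF that] unfolding f2_def by simp
  qed
  ultimately have "0 \<le> f0 t"
    using nonneg_if_deriv_nonneg[of f1 f2] nonneg_if_deriv_nonneg[of f0 f1 t] assms by simp
  then show ?thesis unfolding f0_def by (simp add: algebra_simps power2_eq_square)
qed

lemma hyperbolic_ineq_cosh:
  fixes t :: real
  assumes "t \<ge> 0"
  shows "(t * cosh t - sinh t) * sinh t \<le> 8 * (t * sinh t - 2 * cosh t + 2) * cosh t"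
proof -
  define f0 f1 f2 f3 f4 :: "real \<Rightarrow> real"
    where "f0 = (\<lambda>t. 7 * t * sinh t * cosh t - 16 * (cosh t)\<^sup>2 + 16 * cosh t + (sinh t)\<^sup>2)"
      and "f1 = (\<lambda>t. 7 * t * ((cosh t)\<^sup>2 + (sinh t)\<^sup>2) - 23 * sinh t * cosh t + 16 * sinh t)"
      and "f2 = (\<lambda>t. 28 * t * sinh t * cosh t - 16 * ((cosh t)\<^sup>2 + (sinh t)\<^sup>2) + 16 * cosh t)"
      and "f3 = (\<lambda>t. 28 * t * ((cosh t)\<^sup>2 + (sinh t)\<^sup>2) - 36 * sinh t * cosh t + 16 * sinh t)"
      and "f4 = (\<lambda>t. 112 * t * sinh t * cosh t - 8 * ((cosh t)\<^sup>2 + (sinh t)\<^sup>2) + 16 * cosh t)"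
  have "(f0 has_real_derivative f1 x) (at x)" "(f1 has_real_derivative f2 x) (at x)"
    "(f2 has_real_derivative f3 x) (at x)" "(f3 has_real_derivative f4 x) (at x)" for x
    unfolding f0_def f1_def f2_def f3_def f4_def
    by (auto intro!: derivative_eq_intros simp: algebra_simps power2_eq_square)
  moreover have "f0 0 = 0" "f1 0 = 0" "f2 0 = 0" "f3 0 = 0"
    by (simp_all add: f0_def f1_def f2_def f3_def)
  moreover have "0 \<le> f4 x" if "0 \<le> x" for x
  proof -
    have "224 * (cosh x - 1) * cosh x \<le> 112 * x * sinh x * cosh x"
      using mult_right_mono[OF cosh_minus_one_le_mult_sinh[OF that] cosh_real_nonneg] by simp
    moreover have "0 \<le> 208 * (cosh x - 1) * cosh x + 8"
      using cosh_real_ge_1[of x] by simp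
    ultimately show ?thesis
      unfolding f4_def sinh_square_eq by (simp add: algebra_simps power2_eq_square)
  qed
  ultimately have "0 \<le> f0 t"
    using nonneg_if_deriv_nonneg[of f3 f4] nonneg_if_deriv_nonneg[of f2 f3]
      nonneg_if_deriv_nonneg[of f1 f2] nonneg_if_deriv_nonneg[of f0 f1 t] assms
    by simp
  then show ?thesis
    using sinh_square_eq[of t] unfolding f0_def by (simp add: algebra_simps power2_eq_square)
qed

lemma hyperbolic_ineq_cosh_minus_one:
  fixes t :: real
  assumes "t \<ge> 0"
  shows "(t * cosh t - sinh t) * (sinh t - t) \<le> 8 * (t * sinh t - 2 * cosh t + 2) * (cosh t - 1)"
proof -
  have "(t * cosh t - sinh t) * (sinh t - t) \<le> t * (cosh t - 1) * (sinh t - t)"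
    using sinh_ge_self[OF assms] by (intro mult_right_mono) (auto simp: algebra_simps)
  also have "\<dots> = (cosh t - 1) * (t * (sinh t - t))" by simp
  also have "\<dots> \<le> (cosh t - 1) * (8 * (t * sinh t - 2 * cosh t + 2))"
    using mult_sinh_minus_self_le[OF assms] cosh_real_ge_1[of t] by (intro mult_left_mono) auto
  finally show ?thesis by (simp add: algebra_simps)
qed

section \<open>Comparability up to a constant factor\<close>

definition comparable :: "real \<Rightarrow> real \<Rightarrow> real \<Rightarrow> bool" where
  "comparable K x y \<longleftrightarrow> x \<le> K * y \<and> y \<le> K * x"

lemma comparable_sym: "comparable K x y \<Longrightarrow> comparable K y x"
  unfolding comparable_def by simp

lemma comparable_refl: "1 \<le> K \<Longrightarrow> 0 \<le> x \<Longrightarrow> comparable K x x"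
  unfolding comparable_def using mult_right_mono[of 1 K x] by simp

lemma comparable_if_le: "0 \<le> x \<Longrightarrow> x \<le> y \<Longrightarrow> y \<le> K * x \<Longrightarrow> 1 \<le> K \<Longrightarrow> comparable K x y"
  unfolding comparable_def using mult_right_mono[of 1 K y] by simp

lemma comparable_mono:
  "comparable K x y \<Longrightarrow> K \<le> K' \<Longrightarrow> 0 \<le> x \<Longrightarrow> 0 \<le> y \<Longrightarrow> comparable K' x y"
  unfolding comparable_def by (meson mult_right_mono order_trans)

lemma comparable_trans:
  assumes "comparable K1 x y" "comparable K2 y z" "0 \<le> K1" "0 \<le> K2"
  shows "comparable (K1 * K2) x z"
  using assms mult_left_mono[of y "K2 * z" K1] mult_left_mono[of y "K1 * x" K2]
  unfolding comparable_def by (simp add: ac_simps)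

lemma comparable_add:
  "comparable K x1 y1 \<Longrightarrow> comparable K x2 y2 \<Longrightarrow> comparable K (x1 + x2) (y1 + y2)"
  unfolding comparable_def by (simp add: distrib_left add_mono)

lemma comparable_scale: "comparable K x y \<Longrightarrow> 0 \<le> c \<Longrightarrow> comparable K (x * c) (y * c)"
  unfolding comparable_def by (metis mult.assoc mult_right_mono)

lemma comparable_mult:
  assumes "comparable K1 x1 y1" "comparable K2 x2 y2" "0 \<le> x1" "0 \<le> y1" "0 \<le> x2" "0 \<le> y2"
  shows "comparable (K1 * K2) (x1 * x2) (y1 * y2)"
proof -
  have "x1 * x2 \<le> (K1 * y1) * (K2 * y2)" "y1 * y2 \<le> (K1 * x1) * (K2 * x2)"
    using assms unfolding comparable_def by (auto intro!: mult_mono)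
  then show ?thesis unfolding comparable_def by (simp add: ac_simps)
qed

lemma comparable_power:
  assumes "comparable K x y" "0 \<le> x" "0 \<le> y"
  shows "comparable (K ^ n) (x ^ n) (y ^ n)"
proof (induction n)
  case 0
  then show ?case by (simp add: comparable_def)
next
  case (Suc n)
  from comparable_mult[OF assms(1) Suc] show ?case using assms(2,3) by simp
qed

lemma comparable_divide:
  assumes "comparable K1 x1 y1" "comparable K2 x2 y2" "0 \<le> x1" "0 \<le> y1" "0 < x2" "0 < y2"
  shows "comparable (K1 * K2) (x1 / x2) (y1 / y2)"
proof -
  have "comparable K2 (1 / x2) (1 / y2)"
    using assms(2,5,6) unfolding comparable_def by (simp add: field_simps)
  from comparable_mult[OF assms(1) this] show ?thesis using assms(3-6) by simp
qed

lemma SUP_le_mult_INF: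
  fixes f :: "'a \<Rightarrow> real"
  assumes "S \<noteq> {}" "0 < C" "\<And>x y. x \<in> S \<Longrightarrow> y \<in> S \<Longrightarrow> f x \<le> C * f y"
  shows "(SUP x\<in>S. f x) \<le> C * (INF x\<in>S. f x)"
proof (rule cSUP_least[OF assms(1)])
  fix x assume "x \<in> S"
  have "f x / C \<le> (INF y\<in>S. f y)"
    using assms \<open>x \<in> S\<close> by (intro cINF_greatest) (auto simp: divide_le_eq mult.commute)
  then show "f x \<le> C * (INF y\<in>S. f y)"
    using assms(2) by (simp add: divide_le_eq mult.commute)
qed

section \<open>The functions Phi_k, P_k and Q_k\<close>

definition Phik :: "real \<Rightarrow> real \<Rightarrow> real" where
  "Phik k t = sinh t - k * t"

definition Pk :: "real \<Rightarrow> real \<Rightarrow> real" where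
  "Pk k t = 1 + 3 * k\<^sup>2 + 2 * k * t * sinh t - k * (3 + k\<^sup>2) * cosh t"

definition Qk :: "real \<Rightarrow> real \<Rightarrow> real" where
  "Qk k t = Pk k t / (cosh t - k)"

lemma Phik_0 [simp]: "Phik k 0 = 0"
  by (simp add: Phik_def)

lemma Phik_has_real_derivative: "(Phik k has_real_derivative cosh t - k) (at t)"
  unfolding Phik_def [abs_def] by (auto intro!: derivative_eq_intros)

lemma strict_mono_Phik:
  assumes "k < 1"
  shows "strict_mono (Phik k)"
proof (rule strict_monoI)
  fix s t :: real
  assume "s < t"
  show "Phik k s < Phik k t"
  proof (rule DERIV_pos_imp_increasing[OF \<open>s < t\<close>])
    fix x
    show "\<exists>y. (Phik k has_real_derivative y) (at x) \<and> 0 < y"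
      using Phik_has_real_derivative[of k x] cosh_real_ge_1[of x] assms
      by (intro exI[of _ "cosh x - k"]) auto
  qed
qed

lemma Phik_pos: "k < 1 \<Longrightarrow> 0 < t \<Longrightarrow> 0 < Phik k t"
  using strict_mono_Phik[of k] by (metis Phik_0 strict_mono_less)

lemma Pk_eq:
  "Pk k t = (1 - k) ^ 3 + k * (2 * (t * sinh t - 2 * cosh t + 2))
    + k * (1 - k) * (1 + k) * (cosh t - 1)"
  unfolding Pk_def by (simp add: algebra_simps power2_eq_square power3_eq_cube)

lemma Pk_pos:
  assumes "0 < k" "k < 1" "0 \<le> t"
  shows "0 < Pk k t"
proof -
  have "0 < (1 - k) ^ 3" using assms by simp
  moreover have "0 \<le> k * (2 * (t * sinh t - 2 * cosh t + 2))"
    using cosh_minus_one_le_mult_sinh[OF assms(3)] assms by simp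
  moreover have "0 \<le> k * (1 - k) * (1 + k) * (cosh t - 1)"
    using assms cosh_real_ge_1[of t] by simp
  ultimately show ?thesis unfolding Pk_eq by linarith
qed

lemma Pk_has_real_derivative:
  "(Pk k has_real_derivative 2 * k * t * cosh t - k * (1 + k\<^sup>2) * sinh t) (at t)"
  unfolding Pk_def [abs_def] by (auto intro!: derivative_eq_intros simp: algebra_simps)

lemma Pk_mono:
  assumes "0 < k" "k < 1" "0 \<le> s" "s \<le> t"
  shows "Pk k s \<le> Pk k t"
proof (rule DERIV_nonneg_imp_nondecreasing[OF assms(4)])
  fix x assume "s \<le> x"
  then have "0 \<le> x" using assms(3) by simp
  have "2 * k * x * cosh x - k * (1 + k\<^sup>2) * sinh x
      = 2 * k * (x * cosh x - sinh x) + k * (1 - k\<^sup>2) * sinh x"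
    by (simp add: algebra_simps)
  also have "\<dots> \<ge> 0"
    using sinh_le_mult_cosh[OF \<open>0 \<le> x\<close>] \<open>0 \<le> x\<close> assms(1,2) by (simp add: power_le_one)
  finally show "\<exists>y. (Pk k has_real_derivative y) (at x) \<and> 0 \<le> y"
    using Pk_has_real_derivative by blast
qed

lemma Qk_pos: "0 < k \<Longrightarrow> k < 1 \<Longrightarrow> 0 \<le> t \<Longrightarrow> 0 < Qk k t"
  unfolding Qk_def using Pk_pos[of k t] cosh_real_ge_1[of t] by simp

lemma quotient_power_antimono:
  fixes X Y X' Y' :: "real \<Rightarrow> real" and n :: nat
  assumes dX: "\<And>t. 0 < t \<Longrightarrow> (X has_real_derivative X' t) (at t)"
    and dY: "\<And>t. 0 < t \<Longrightarrow> (Y has_real_derivative Y' t) (at t)"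
    and Y_pos: "\<And>t. 0 < t \<Longrightarrow> 0 < Y t"
    and log_deriv_le: "\<And>t. 0 < t \<Longrightarrow> X' t * Y t \<le> n * X t * Y' t"
    and "0 < n" "0 < s" "s \<le> t"
  shows "X t * Y s ^ n \<le> X s * Y t ^ n"
proof -
  have "X t / Y t ^ n \<le> X s / Y s ^ n"
  proof (rule DERIV_nonpos_imp_nonincreasing[OF \<open>s \<le> t\<close>])
    fix x assume "s \<le> x"
    then have "0 < x" using \<open>0 < s\<close> by simp
    have Y_pow: "Y x ^ n = Y x ^ (n - 1) * Y x"
      by (metis power_minus_mult[OF \<open>0 < n\<close>])
    have "X' x * Y x ^ n - n * (Y' x * Y x ^ (n - 1)) * X x
        = Y x ^ (n - 1) * (X' x * Y x - n * X x * Y' x)"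
      unfolding Y_pow by (simp add: algebra_simps)
    also have "\<dots> \<le> 0"
      using log_deriv_le[OF \<open>0 < x\<close>] Y_pos[OF \<open>0 < x\<close>] by (intro mult_nonneg_nonpos) auto
    finally have "(X' x * Y x ^ n - n * (Y' x * Y x ^ (n - 1)) * X x) / (Y x ^ n)\<^sup>2 \<le> 0"
      by (rule divide_nonpos_nonneg) simp
    moreover have "((\<lambda>t. X t / Y t ^ n) has_real_derivative
        (X' x * Y x ^ n - n * (Y' x * Y x ^ (n - 1)) * X x) / (Y x ^ n)\<^sup>2) (at x)"
      using DERIV_quotient[OF dX[OF \<open>0 < x\<close>] DERIV_power[OF dY[OF \<open>0 < x\<close>]]]
        Y_pos[OF \<open>0 < x\<close>] by (simp add: power2_eq_square)
    ultimately show "\<exists>y. ((\<lambda>t. X t / Y t ^ n) has_real_derivative y) (at x) \<and> y \<le> 0"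
      by blast
  qed
  then show ?thesis
    using Y_pos[of s] Y_pos[of t] assms(6,7) by (simp add: field_simps)
qed

lemma Phik_log_concave:
  assumes "0 < k" "k < 1" "0 < s" "s \<le> t"
  shows "(cosh t - k) * Phik k s \<le> (cosh s - k) * Phik k t"
proof -
  have "(cosh t - k) * Phik k s ^ 1 \<le> (cosh s - k) * Phik k t ^ 1"
  proof (rule quotient_power_antimono[where X' = sinh and Y' = "\<lambda>t. cosh t - k"])
    show "((\<lambda>t. cosh t - k) has_real_derivative sinh x) (at x)" for x
      by (auto intro!: derivative_eq_intros)
    show "sinh x * Phik k x \<le> real 1 * (cosh x - k) * (cosh x - k)" if "0 < x" for x
    proof -
      have "real 1 * (cosh x - k) * (cosh x - k) - sinh x * Phik k x
          = (1 - k)\<^sup>2 + k * (x * sinh x - 2 * cosh x + 2)"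
        unfolding Phik_def using sinh_square_eq[of x] by (simp add: algebra_simps power2_eq_square)
      moreover have "0 \<le> k * (x * sinh x - 2 * cosh x + 2)"
        using cosh_minus_one_le_mult_sinh[of x] assms that by simp
      ultimately show ?thesis by (smt (verit) zero_le_power2)
    qed
  qed (use assms Phik_has_real_derivative Phik_pos in auto)
  then show ?thesis by simp
qed

lemma Pk_deriv_mult_Phik_le:
  fixes k t :: real
  assumes "0 < k" "k < 1" "0 \<le> t"
  shows "(2 * k * t * cosh t - k * (1 + k\<^sup>2) * sinh t) * Phik k t \<le> 8 * Pk k t * (cosh t - k)"
proof -
  define S C c d where "S = sinh t" and "C = cosh t"
    and "c = t * sinh t - 2 * cosh t + 2" and "d = t * cosh t - sinh t"
  have "S\<^sup>2 = C\<^sup>2 - 1" unfolding S_def C_def by (rule sinh_square_eq)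
  then have "8 * Pk k t * (cosh t - k) - (2 * k * t * cosh t - k * (1 + k\<^sup>2) * sinh t) * Phik k t
      = 8 * (1 - k) ^ 3 * (C - k)
        + 2 * k * ((1 - k) * (8 * c * C - d * S) + k * (8 * c * (C - 1) - d * (S - t)))
        + k * (1 - k\<^sup>2) * (6 * (C - 1) * (C - k) + (C - 1)\<^sup>2 + k * c)"
    unfolding Pk_def Phik_def S_def [symmetric] C_def [symmetric] c_def d_def by algebra
  moreover have "0 \<le> 8 * (1 - k) ^ 3 * (C - k)"
    using assms cosh_real_ge_1[of t] unfolding C_def by simp
  moreover have "0 \<le> 2 * k * ((1 - k) * (8 * c * C - d * S) + k * (8 * c * (C - 1) - d * (S - t)))"
    using hyperbolic_ineq_cosh[OF assms(3)] hyperbolic_ineq_cosh_minus_one[OF assms(3)] assms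
    unfolding S_def C_def c_def d_def by simp
  moreover have "0 \<le> k * (1 - k\<^sup>2) * (6 * (C - 1) * (C - k) + (C - 1)\<^sup>2 + k * c)"
    using assms cosh_real_ge_1[of t] cosh_minus_one_le_mult_sinh[OF assms(3)]
    unfolding C_def c_def by (simp add: power_le_one)
  ultimately show ?thesis by linarith
qed

lemma Pk_over_Phik_pow_antimono:
  assumes "0 < k" "k < 1" "0 < s" "s \<le> t"
  shows "Pk k t * Phik k s ^ 8 \<le> Pk k s * Phik k t ^ 8"
  using assms Pk_has_real_derivative Phik_has_real_derivative Phik_pos Pk_deriv_mult_Phik_le
  by (intro quotient_power_antimono[where X' = "\<lambda>t. 2 * k * t * cosh t - k * (1 + k\<^sup>2) * sinh t"
        and Y' = "\<lambda>t. cosh t - k"]) auto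

lemma Qk_comparable_in_t:
  assumes k: "0 < k" "k < 1" and t: "0 \<le> s" "s \<le> t" and "1 \<le> K"
    and Phik_le: "Phik k t \<le> K * Phik k s"
  shows "comparable (K ^ 8 * K) (Qk k s) (Qk k t)"
proof (cases "s = 0")
  case True
  then have "Phik k t \<le> 0" using Phik_le by simp
  then have "t = 0" using Phik_pos[OF k(2), of t] t by force
  have "1 \<le> K ^ 8 * K" using \<open>1 \<le> K\<close> by (metis one_le_power power_Suc2)
  then show ?thesis
    using Qk_pos[OF k, of 0] \<open>s = 0\<close> \<open>t = 0\<close> by (simp add: comparable_refl)
next
  case False
  then have "0 < s" using t by simp
  have Phik_pos_s: "0 < Phik k s" using Phik_pos[OF k(2) \<open>0 < s\<close>] .
  have "Pk k t * Phik k s ^ 8 \<le> Pk k s * Phik k t ^ 8"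
    using Pk_over_Phik_pow_antimono[OF k \<open>0 < s\<close> t(2)] .
  also have "\<dots> \<le> Pk k s * (K * Phik k s) ^ 8"
    using Pk_pos[OF k t(1)] Phik_pos[OF k(2), of t] Phik_le \<open>0 < s\<close> t
    by (intro mult_left_mono power_mono) auto
  finally have "Pk k t \<le> K ^ 8 * Pk k s"
    using Phik_pos_s by (simp add: power_mult_distrib ac_simps)
  then have Pk: "comparable (K ^ 8) (Pk k s) (Pk k t)"
    using Pk_pos[OF k t(1)] Pk_mono[OF k t] \<open>1 \<le> K\<close>
    by (intro comparable_if_le) (auto simp: one_le_power)
  have "(cosh t - k) * Phik k s \<le> (cosh s - k) * Phik k t"
    using Phik_log_concave[OF k \<open>0 < s\<close> t(2)] .
  also have "\<dots> \<le> (cosh s - k) * (K * Phik k s)"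
    using Phik_le cosh_real_ge_1[of s] k by (intro mult_left_mono) auto
  finally have "(cosh t - k) * Phik k s \<le> (K * (cosh s - k)) * Phik k s"
    by (simp add: ac_simps)
  then have "cosh t - k \<le> K * (cosh s - k)"
    using Phik_pos_s by (rule mult_right_le_imp_le)
  then have "comparable K (cosh s - k) (cosh t - k)"
    using cosh_real_ge_1[of s] cosh_real_nonneg_le_iff[of s t] k t \<open>1 \<le> K\<close>
    by (intro comparable_if_le) auto
  from comparable_divide[OF Pk this] show ?thesis
    unfolding Qk_def using Pk_pos[OF k t(1)] Pk_pos[OF k, of t] t k
      cosh_real_ge_1[of s] cosh_real_ge_1[of t]
    by simp
qed

lemma Qk_comparable_in_k:
  assumes k: "0 < k1" "k1 < 1" "0 < k2" "k2 < 1" and "0 \<le> t" "1 \<le> K"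
    and comp_k: "comparable K k1 k2" and comp_1_minus_k: "comparable K (1 - k1) (1 - k2)"
  shows "comparable (2 * K ^ 3 * K) (Qk k1 t) (Qk k2 t)"
proof -
  define c where "c = t * sinh t - 2 * cosh t + 2"
  define b where "b = cosh t - 1"
  have "0 \<le> c" unfolding c_def using cosh_minus_one_le_mult_sinh[OF \<open>0 \<le> t\<close>] by simp
  have "0 \<le> b" unfolding b_def using cosh_real_ge_1[of t] by simp
  have "K \<le> K ^ 3" "K * K \<le> K ^ 3"
    using power_increasing[of 1 3 K] power_increasing[of 2 3 K] \<open>1 \<le> K\<close>
    by (simp_all add: power2_eq_square)
  then have K: "K ^ 3 \<le> 2 * K ^ 3" "K \<le> 2 * K ^ 3" "K * K * 2 \<le> 2 * K ^ 3"
    using \<open>1 \<le> K\<close> by linarith+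
  have "comparable 2 (1 + k1) (1 + k2)"
    unfolding comparable_def using k by simp
  with comparable_mult[OF comp_k comp_1_minus_k]
  have "comparable (K * K * 2) (k1 * (1 - k1) * (1 + k1)) (k2 * (1 - k2) * (1 + k2))"
    by (rule comparable_mult) (use k in \<open>auto intro!: mult_nonneg_nonneg\<close>)
  from comparable_mono[OF comparable_scale[OF this \<open>0 \<le> b\<close>] K(3)]
  have C: "comparable (2 * K ^ 3) (k1 * (1 - k1) * (1 + k1) * b) (k2 * (1 - k2) * (1 + k2) * b)"
    using \<open>0 \<le> b\<close> k by (auto intro!: mult_nonneg_nonneg)
  from comparable_mono[OF comparable_scale[OF comp_k, of "2 * c"] K(2)]
  have B: "comparable (2 * K ^ 3) (k1 * (2 * c)) (k2 * (2 * c))"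
    using \<open>0 \<le> c\<close> k by simp
  from comparable_mono[OF comparable_power[OF comp_1_minus_k, of 3] K(1)]
  have A: "comparable (2 * K ^ 3) ((1 - k1) ^ 3) ((1 - k2) ^ 3)"
    using k by simp
  from comparable_add[OF comparable_add[OF A B] C]
  have Pk: "comparable (2 * K ^ 3) (Pk k1 t) (Pk k2 t)"
    unfolding Pk_eq c_def b_def .
  have "comparable K (b + (1 - k1)) (b + (1 - k2))"
    using comparable_refl[OF \<open>1 \<le> K\<close> \<open>0 \<le> b\<close>] comp_1_minus_k by (rule comparable_add)
  then have "comparable K (cosh t - k1) (cosh t - k2)"
    unfolding b_def by simp
  from comparable_divide[OF Pk this] show ?thesis
    unfolding Qk_def using Pk_pos[OF k(1,2) \<open>0 \<le> t\<close>] Pk_pos[OF k(3,4) \<open>0 \<le> t\<close>]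
      cosh_real_ge_1[of t] k
    by simp
qed

definition Tk :: "real \<Rightarrow> real \<Rightarrow> real" where
  "Tk k y = the_inv_into {0..} (Phik k) y"

lemma Phik_surj:
  assumes "k < 1" "0 \<le> y"
  shows "\<exists>t\<ge>0. Phik k t = y"
proof -
  define T where "T = y / (1 - k)"
  have "0 \<le> T" unfolding T_def using assms by simp
  have "y = (1 - k) * T" unfolding T_def using assms by simp
  also have "\<dots> \<le> Phik k T"
    unfolding Phik_def using sinh_ge_self[OF \<open>0 \<le> T\<close>] by (simp add: algebra_simps)
  finally have "Phik k 0 \<le> y" "y \<le> Phik k T" using assms by auto
  moreover have "isCont (Phik k) x" for x
    using Phik_has_real_derivative by (rule DERIV_isCont)
  ultimately show ?thesis
    using IVT[of "Phik k" 0 y T] \<open>0 \<le> T\<close> by auto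
qed

lemma Tk_root:
  assumes "k < 1" "0 \<le> y"
  shows "0 \<le> Tk k y" "Phik k (Tk k y) = y"
proof -
  obtain t where t: "0 \<le> t" "Phik k t = y" using Phik_surj[OF assms] by blast
  have "Tk k y = t" unfolding Tk_def
    using strict_mono_Phik[OF assms(1)] t
    by (intro the_inv_into_f_eq) (auto intro: strict_mono_imp_inj_on)
  then show "0 \<le> Tk k y" "Phik k (Tk k y) = y" using t by auto
qed

lemma Gk_cosh: "0 \<le> t \<Longrightarrow> Gk k (cosh t) = Phik k t"
  unfolding Gk_def Phik_def by (simp add: sinh_square_eq [symmetric] cosh_plus_sinh)

lemma inj_on_Gk:
  assumes "k < 1"
  shows "inj_on (Gk k) {1..}"
proof (rule inj_onI)
  fix x y :: real
  assume "x \<in> {1..}" "y \<in> {1..}" "Gk k x = Gk k y"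
  then have "Phik k (arcosh x) = Phik k (arcosh y)"
    using Gk_cosh[of "arcosh x" k] Gk_cosh[of "arcosh y" k] by simp
  then have "arcosh x = arcosh y"
    using strict_mono_Phik[OF assms] by (simp add: strict_mono_eq)
  then show "x = y"
    using \<open>x \<in> {1..}\<close> \<open>y \<in> {1..}\<close> by (metis atLeast_iff cosh_arcosh_real)
qed

lemma Hk_eq_cosh_Tk:
  assumes "k < 1" "0 \<le> y"
  shows "Hk k y = cosh (Tk k y)"
  unfolding Hk_def using Tk_root[OF assms] Gk_cosh[of "Tk k y" k] cosh_real_ge_1
  by (intro the_inv_into_f_eq[OF inj_on_Gk[OF assms(1)]]) auto

section \<open>Implicitly defined roots\<close>

lemma isCont_monotone_root:
  fixes h :: "real \<Rightarrow> real \<Rightarrow> real" and T :: "real \<Rightarrow> real"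
  assumes "open U" "x \<in> U"
    and h_cont: "\<And>t. isCont (\<lambda>y. h y t) x"
    and h_mono: "\<And>y s t. y \<in> U \<Longrightarrow> 0 \<le> s \<Longrightarrow> s < t \<Longrightarrow> h y s < h y t"
    and T_nonneg: "\<And>y. y \<in> U \<Longrightarrow> 0 \<le> T y"
    and T_root: "\<And>y. y \<in> U \<Longrightarrow> h y (T y) = c"
  shows "isCont T x"
proof -
  have near: "\<forall>\<^sub>F y in at x. y \<in> U"
    using assms(1,2) by (rule eventually_at_in_open')
  have h_le_iff: "h y s \<le> h y t \<longleftrightarrow> s \<le> t" if "y \<in> U" "0 \<le> s" "0 \<le> t" for y s t
    using h_mono[OF that(1,2), of t] h_mono[OF that(1,3), of s]
    by (cases s t rule: linorder_cases) auto
  show ?thesis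
    unfolding isCont_def
  proof (rule order_tendstoI)
    fix a assume "a < T x"
    show "\<forall>\<^sub>F y in at x. a < T y"
    proof (cases "a < 0")
      case True
      from near show ?thesis by eventually_elim (use T_nonneg True in force)
    next
      case False
      then have "h x a < c"
        using h_mono[OF \<open>x \<in> U\<close> _ \<open>a < T x\<close>] T_root[OF \<open>x \<in> U\<close>] by simp
      then have "\<forall>\<^sub>F y in at x. h y a < c"
        using order_tendstoD(2)[OF h_cont[of a, unfolded isCont_def]] by blast
      with near show ?thesis
        by eventually_elim (use False T_root T_nonneg h_le_iff in \<open>force simp: not_less\<close>)
    qed
  next
    fix a assume "T x < a"
    then have "0 \<le> a" using T_nonneg[OF \<open>x \<in> U\<close>] by simp
    have "c < h x a"
      using h_mono[OF \<open>x \<in> U\<close> T_nonneg[OF \<open>x \<in> U\<close>] \<open>T x < a\<close>] T_root[OF \<open>x \<in> U\<close>] by simp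
    then have "\<forall>\<^sub>F y in at x. c < h y a"
      using order_tendstoD(1)[OF h_cont[of a, unfolded isCont_def]] by blast
    with near show "\<forall>\<^sub>F y in at x. T y < a"
      by eventually_elim (use \<open>0 \<le> a\<close> T_root T_nonneg h_le_iff in \<open>force simp: not_less\<close>)
  qed
qed

lemma has_real_derivative_implicit:
  fixes A B T g :: "real \<Rightarrow> real"
  assumes dA: "(A has_real_derivative A') (at x)" and dB: "(B has_real_derivative B') (at x)"
    and dg: "(g has_real_derivative g') (at (T x))"
    and T_cont: "isCont T x"
    and eq: "\<forall>\<^sub>F y in at x. A y * g (T y) - B y * T y = c"
    and eq_x: "A x * g (T x) - B x * T x = c"
    and nz: "A x * g' - B x \<noteq> 0"
  shows "(T has_real_derivative (B' * T x - A' * g (T x)) / (A x * g' - B x)) (at x)"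
proof -
  \<comment> \<open>Caratheodory's form of the derivative of \<open>g\<close> makes the equation linear in \<open>T y - T x\<close>.\<close>
  obtain \<sigma> where \<sigma>: "\<And>z. g z - g (T x) = \<sigma> z * (z - T x)" "isCont \<sigma> (T x)" "\<sigma> (T x) = g'"
    using CARAT_DERIV[THEN iffD1, OF dg] by blast
  have T_lim: "(T \<longlongrightarrow> T x) (at x)" using T_cont by (simp add: isCont_def)
  have den: "((\<lambda>y. A x * \<sigma> (T y) - B x) \<longlongrightarrow> A x * g' - B x) (at x)"
    using isCont_tendsto_compose[OF \<sigma>(2) T_lim] \<sigma>(3) by (auto intro!: tendsto_intros)
  have "((\<lambda>y. g (T y)) \<longlongrightarrow> g (T x)) (at x)"
    using isCont_tendsto_compose[OF DERIV_isCont[OF dg] T_lim] .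
  moreover have "((\<lambda>y. (A y - A x) / (y - x)) \<longlongrightarrow> A') (at x)"
    "((\<lambda>y. (B y - B x) / (y - x)) \<longlongrightarrow> B') (at x)"
    using dA dB by (simp_all add: has_field_derivative_iff)
  ultimately have "((\<lambda>y. - ((A y - A x) / (y - x)) * g (T y) + ((B y - B x) / (y - x)) * T y)
      \<longlongrightarrow> - A' * g (T x) + B' * T x) (at x)"
    using T_lim by (intro tendsto_intros)
  from tendsto_divide[OF this den nz]
  have "((\<lambda>y. (- ((A y - A x) / (y - x)) * g (T y) + ((B y - B x) / (y - x)) * T y)
        / (A x * \<sigma> (T y) - B x)) \<longlongrightarrow> (B' * T x - A' * g (T x)) / (A x * g' - B x)) (at x)"
    by (simp add: algebra_simps)
  moreover have "\<forall>\<^sub>F y in at x. y \<noteq> x"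
    by (simp add: eventually_at_filter)
  then have "\<forall>\<^sub>F y in at x.
      (- ((A y - A x) / (y - x)) * g (T y) + ((B y - B x) / (y - x)) * T y) / (A x * \<sigma> (T y) - B x)
        = (T y - T x) / (y - x)"
    using eq tendsto_imp_eventually_ne[OF den nz]
  proof eventually_elim
    case (elim y)
    have "(A y - A x) * g (T y) + A x * (g (T y) - g (T x))
        - (B y - B x) * T y - B x * (T y - T x) = 0"
      using elim(2) eq_x by (simp add: algebra_simps)
    then have "- (A y - A x) * g (T y) + (B y - B x) * T y
        = (T y - T x) * (A x * \<sigma> (T y) - B x)"
      unfolding \<sigma>(1) by (simp add: algebra_simps)
    moreover have "- ((A y - A x) / (y - x)) * g (T y) + ((B y - B x) / (y - x)) * T y
        = (- (A y - A x) * g (T y) + (B y - B x) * T y) / (y - x)"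
      by (simp add: add_divide_distrib minus_divide_left)
    ultimately show ?case
      using elim(3) by simp
  qed
  ultimately show ?thesis
    by (simp add: has_field_derivative_iff Lim_transform_eventually)
qed

section \<open>Dependence of R on a\<close>

text \<open>In the notation of the paper, \<open>qfun = 1 / kappa\<close>, \<open>bfun = p * kappa\<close> and
  \<open>H_kappa (|theta| / p) = cosh Tfun\<close>.\<close>

definition qfun :: "real \<Rightarrow> real \<Rightarrow> real \<Rightarrow> real" where
  "qfun m a l = sqrt (1 + 4 * a\<^sup>2 * l / m\<^sup>2)"

definition bfun :: "real \<Rightarrow> real \<Rightarrow> real" where
  "bfun m a = m / (2 * a\<^sup>2)"

definition Tfun :: "real \<Rightarrow> real \<Rightarrow> real \<Rightarrow> real \<Rightarrow> real" where
  "Tfun m \<theta> a l = Tk (kappa m a l) (\<bar>\<theta>\<bar> / pfun m a l)"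

lemma kappa_eq: "kappa m a l = 1 / qfun m a l"
  unfolding kappa_def qfun_def ..

text \<open>The left-hand side is \<open>A' cosh T + A sinh T T' - B'\<close> with \<open>A = B Q = p\<close>, \<open>A' = dp/da\<close>,
  \<open>B' = db/da\<close> and \<open>T'\<close> obtained by implicit differentiation.\<close>

lemma Rfun_deriv_identity:
  fixes B Q x t :: real
  assumes "0 < B" "1 < Q" "0 < x"
  shows "- (B / (x * Q)) * (Q\<^sup>2 + 1) * cosh t
      + B * Q * (sinh t
          * ((- (2 * B / x) * t + B / (x * Q) * (Q\<^sup>2 + 1) * sinh t) / (B * Q * cosh t - B)))
      + 2 * B / x
    = - (B * Q / x) * Qk (1 / Q) t"
proof -
  have "Q \<le> Q * cosh t"
    using mult_left_mono[OF cosh_real_ge_1[of t], of Q] assms(2) by simp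
  then have "1 < Q * cosh t" using assms(2) by linarith
  then have "B * Q * cosh t - B \<noteq> 0" "cosh t - 1 / Q \<noteq> 0" "Q * cosh t - 1 \<noteq> 0"
    using assms by (auto simp: field_simps)
  then show ?thesis
    unfolding Qk_def Pk_def using assms sinh_square_eq[of t]
    by (simp add: field_simps power2_eq_square power3_eq_cube) algebra
qed

context
  fixes m l :: real
  assumes m: "0 < m" and l: "0 < l"
begin

lemma qfun_squared: "(qfun m a l)\<^sup>2 = 1 + 4 * a\<^sup>2 * l / m\<^sup>2"
  unfolding qfun_def using m l by simp

lemma qfun_gt_1: "0 < a \<Longrightarrow> 1 < qfun m a l"
  unfolding qfun_def using m l by simp

lemma kappa_pos_lt_1:
  assumes "0 < a"
  shows "0 < kappa m a l" "kappa m a l < 1"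
  unfolding kappa_eq using qfun_gt_1[OF assms] by simp_all

lemma bfun_pos: "0 < a \<Longrightarrow> 0 < bfun m a"
  unfolding bfun_def using m by simp

lemma pfun_eq: "0 < a \<Longrightarrow> pfun m a l = bfun m a * qfun m a l"
  unfolding pfun_def kappa_eq bfun_def using qfun_gt_1[of a] by simp

lemma pfun_pos: "0 < a \<Longrightarrow> 0 < pfun m a l"
  using pfun_eq[of a] bfun_pos[of a] qfun_gt_1[of a] by (simp add: zero_less_mult_iff)

lemma pfun_mult_kappa: "0 < a \<Longrightarrow> pfun m a l * kappa m a l = bfun m a"
  unfolding kappa_eq using pfun_eq[of a] qfun_gt_1[of a] by simp

lemma pfun_mult_Phik:
  "0 < a \<Longrightarrow> pfun m a l * Phik (kappa m a l) t = pfun m a l * sinh t - bfun m a * t"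
  unfolding Phik_def using pfun_mult_kappa[of a] by (simp add: algebra_simps)

lemma Tfun_root:
  assumes "0 < a"
  shows "0 \<le> Tfun m \<theta> a l"
    and "pfun m a l * sinh (Tfun m \<theta> a l) - bfun m a * Tfun m \<theta> a l = \<bar>\<theta>\<bar>"
    and "Rfun m \<theta> a l = pfun m a l * cosh (Tfun m \<theta> a l) - bfun m a"
proof -
  have y: "0 \<le> \<bar>\<theta>\<bar> / pfun m a l" using pfun_pos[OF assms] by simp
  note T = Tk_root[OF kappa_pos_lt_1(2)[OF assms] y]
  show "0 \<le> Tfun m \<theta> a l" unfolding Tfun_def using T(1) .
  show "pfun m a l * sinh (Tfun m \<theta> a l) - bfun m a * Tfun m \<theta> a l = \<bar>\<theta>\<bar>"
    unfolding pfun_mult_Phik[OF assms, symmetric] Tfun_def T(2) using pfun_pos[OF assms] by simp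
  show "Rfun m \<theta> a l = pfun m a l * cosh (Tfun m \<theta> a l) - bfun m a"
    unfolding Rfun_def Hk_eq_cosh_Tk[OF kappa_pos_lt_1(2)[OF assms] y] Tfun_def
    using pfun_mult_kappa[OF assms] by simp
qed

lemma bfun_has_real_derivative:
  "0 < a \<Longrightarrow> (bfun m has_real_derivative - (2 * bfun m a / a)) (at a)"
  unfolding bfun_def [abs_def]
  by (auto intro!: derivative_eq_intros simp: field_simps power2_eq_square power3_eq_cube)

lemma qfun_has_real_derivative:
  assumes "0 < a"
  shows "((\<lambda>b. qfun m b l) has_real_derivative ((qfun m a l)\<^sup>2 - 1) / (a * qfun m a l)) (at a)"
proof -
  have pos: "0 < 1 + 4 * a\<^sup>2 * l / m\<^sup>2" using m l by (simp add: add_pos_nonneg)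
  have "((\<lambda>b. sqrt (1 + 4 * b\<^sup>2 * l / m\<^sup>2)) has_real_derivative
      (4 * a * l / m\<^sup>2) / sqrt (1 + 4 * a\<^sup>2 * l / m\<^sup>2)) (at a)"
    using pos m by (auto intro!: derivative_eq_intros simp: field_simps power2_eq_square)
  then have "((\<lambda>b. qfun m b l) has_real_derivative (4 * a * l / m\<^sup>2) / qfun m a l) (at a)"
    unfolding qfun_def .
  moreover have "(4 * a * l / m\<^sup>2) / qfun m a l = ((qfun m a l)\<^sup>2 - 1) / (a * qfun m a l)"
    unfolding qfun_squared using assms m by (simp add: field_simps power2_eq_square)
  ultimately show ?thesis by (rule DERIV_cong)
qed

lemma pfun_has_real_derivative:
  assumes "0 < a"
  shows "((\<lambda>b. pfun m b l) has_real_derivative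
      - (bfun m a / (a * qfun m a l)) * ((qfun m a l)\<^sup>2 + 1)) (at a)"
proof -
  have "((\<lambda>b. bfun m b * qfun m b l) has_real_derivative
      - (2 * bfun m a / a) * qfun m a l
      + ((qfun m a l)\<^sup>2 - 1) / (a * qfun m a l) * bfun m a) (at a)"
    by (rule DERIV_mult[OF bfun_has_real_derivative[OF assms] qfun_has_real_derivative[OF assms]])
  moreover have "- (2 * bfun m a / a) * qfun m a l
      + ((qfun m a l)\<^sup>2 - 1) / (a * qfun m a l) * bfun m a
      = - (bfun m a / (a * qfun m a l)) * ((qfun m a l)\<^sup>2 + 1)"
    using qfun_gt_1[OF assms] assms by (simp add: field_simps power2_eq_square)
  ultimately have "((\<lambda>b. bfun m b * qfun m b l) has_real_derivative
      - (bfun m a / (a * qfun m a l)) * ((qfun m a l)\<^sup>2 + 1)) (at a)"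
    by (rule DERIV_cong)
  then show ?thesis
    by (rule has_field_derivative_transform_within_open[where S = "{0<..}"])
      (use assms pfun_eq in auto)
qed

lemma isCont_Tfun:
  assumes "0 < a"
  shows "isCont (\<lambda>b. Tfun m \<theta> b l) a"
proof (rule isCont_monotone_root[where h = "\<lambda>b t. pfun m b l * sinh t - bfun m b * t"
      and U = "{0<..}" and c = "\<bar>\<theta>\<bar>"])
  show "isCont (\<lambda>b. pfun m b l * sinh t - bfun m b * t) a" for t
    using DERIV_isCont[OF pfun_has_real_derivative[OF assms]]
      DERIV_isCont[OF bfun_has_real_derivative[OF assms]]
    by (auto intro!: continuous_intros)
  show "pfun m b l * sinh s - bfun m b * s < pfun m b l * sinh t - bfun m b * t"
    if "b \<in> {0<..}" "0 \<le> s" "s < t" for b s t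
  proof -
    have "Phik (kappa m b l) s < Phik (kappa m b l) t"
      using strict_mono_Phik[OF kappa_pos_lt_1(2)] that by (simp add: strict_mono_less)
    then show ?thesis
      using pfun_pos[of b] pfun_mult_Phik[of b, symmetric] that by simp
  qed
qed (use assms Tfun_root in simp_all)

lemma Rfun_has_real_derivative:
  assumes "0 < a"
  shows "((\<lambda>b. Rfun m \<theta> b l) has_real_derivative
      - (pfun m a l / a) * Qk (kappa m a l) (Tfun m \<theta> a l)) (at a)"
proof -
  define T where "T = (\<lambda>b. Tfun m \<theta> b l)"
  define B Q where "B = bfun m a" and "Q = qfun m a l"
  define A' B' where "A' = - (B / (a * Q)) * (Q\<^sup>2 + 1)" and "B' = - (2 * B / a)"
  have "1 < Q" "0 < B" unfolding Q_def B_def using qfun_gt_1 bfun_pos assms by auto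
  have pfun_a: "pfun m a l = B * Q" unfolding B_def Q_def using pfun_eq[OF assms] .
  have "Q \<le> Q * cosh (T a)"
    using mult_left_mono[OF cosh_real_ge_1[of "T a"], of Q] \<open>1 < Q\<close> by simp
  then have "1 < Q * cosh (T a)" using \<open>1 < Q\<close> by linarith
  then have nz: "pfun m a l * cosh (T a) - bfun m a \<noteq> 0"
    unfolding pfun_a B_def [symmetric] using \<open>0 < B\<close> by (simp add: algebra_simps)
  have "\<forall>\<^sub>F b in at a. b \<in> {0<..}"
    using assms by (intro eventually_at_in_open') auto
  then have eq: "\<forall>\<^sub>F b in at a. pfun m b l * sinh (T b) - bfun m b * T b = \<bar>\<theta>\<bar>"
    by eventually_elim (use Tfun_root(2) in \<open>simp add: T_def\<close>)
  have eq_a: "pfun m a l * sinh (T a) - bfun m a * T a = \<bar>\<theta>\<bar>"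
    unfolding T_def using Tfun_root(2)[OF assms] .
  have "isCont T a" unfolding T_def using isCont_Tfun[OF assms] .
  have "(sinh has_real_derivative cosh (T a)) (at (T a))"
    using has_field_derivative_sinh[OF DERIV_ident] by simp
  from has_real_derivative_implicit[OF pfun_has_real_derivative[OF assms]
      bfun_has_real_derivative[OF assms] this \<open>isCont T a\<close> eq eq_a nz]
  have dT: "(T has_real_derivative
      (B' * T a - A' * sinh (T a)) / (pfun m a l * cosh (T a) - bfun m a)) (at a)"
    unfolding A'_def B'_def B_def Q_def .
  have "((\<lambda>b. pfun m b l * cosh (T b) - bfun m b) has_real_derivative
      A' * cosh (T a) + pfun m a l * (sinh (T a) * ((B' * T a - A' * sinh (T a))
        / (pfun m a l * cosh (T a) - bfun m a))) - B') (at a)"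
    using pfun_has_real_derivative[OF assms] bfun_has_real_derivative[OF assms] dT
    unfolding A'_def B'_def B_def Q_def by (auto intro!: derivative_eq_intros)
  also have "A' * cosh (T a) + pfun m a l * (sinh (T a) * ((B' * T a - A' * sinh (T a))
        / (pfun m a l * cosh (T a) - bfun m a))) - B' = - (pfun m a l / a) * Qk (kappa m a l) (T a)"
    using Rfun_deriv_identity[OF \<open>0 < B\<close> \<open>1 < Q\<close> assms, of "T a"]
    unfolding A'_def B'_def pfun_a kappa_eq Q_def [symmetric] B_def [symmetric]
    by (simp add: algebra_simps)
  finally show ?thesis
    unfolding T_def
    by (rule has_field_derivative_transform_within_open[where S = "{0<..}"])
      (use assms Tfun_root(3) in auto)
qed

lemma abs_deriv_Rfun:
  assumes "0 < a"
  shows "\<bar>deriv (\<lambda>b. Rfun m \<theta> b l) a\<bar> = pfun m a l / a * Qk (kappa m a l) (Tfun m \<theta> a l)"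
  using DERIV_imp_deriv[OF Rfun_has_real_derivative[OF assms, of \<theta>]] pfun_pos[OF assms] assms
    Qk_pos[OF kappa_pos_lt_1[OF assms] Tfun_root(1)[OF assms, of \<theta>]]
  by (simp add: abs_mult)

lemma qfun_mono: "0 < a1 \<Longrightarrow> a1 \<le> a2 \<Longrightarrow> qfun m a1 l \<le> qfun m a2 l"
  unfolding qfun_def using m l by (simp add: power_mono divide_right_mono)

lemma qfun_comparable:
  assumes "0 < a1" "0 < a2" "1 \<le> K" "comparable K a1 a2"
  shows "comparable K (qfun m a1 l) (qfun m a2 l)"
proof -
  define c where "c = 4 * l / m\<^sup>2"
  have "0 \<le> c" unfolding c_def using l by simp
  have q: "qfun m a l = sqrt (1 + a\<^sup>2 * c)" for a
    unfolding qfun_def c_def by simp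
  have le: "qfun m y l \<le> K * qfun m x l" if "0 < y" "y \<le> K * x" for x y
  proof -
    have "y\<^sup>2 \<le> K\<^sup>2 * x\<^sup>2"
      using power_mono[OF that(2), of 2] that(1) by (simp add: power_mult_distrib)
    then have "y\<^sup>2 * c \<le> K\<^sup>2 * x\<^sup>2 * c"
      using \<open>0 \<le> c\<close> by (rule mult_right_mono)
    moreover have "1 \<le> K\<^sup>2" using assms(3) by (simp add: one_le_power)
    moreover have "K\<^sup>2 * (1 + x\<^sup>2 * c) = K\<^sup>2 + K\<^sup>2 * x\<^sup>2 * c" by (simp add: algebra_simps)
    ultimately have "1 + y\<^sup>2 * c \<le> K\<^sup>2 * (1 + x\<^sup>2 * c)" by linarith
    then have "qfun m y l \<le> sqrt (K\<^sup>2 * (1 + x\<^sup>2 * c))"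
      unfolding q by (rule real_sqrt_le_mono)
    then show ?thesis
      using assms(3) unfolding q by (simp add: real_sqrt_mult)
  qed
  show ?thesis
    using assms le unfolding comparable_def by blast
qed

lemma prefactor_comparable:
  assumes "0 < a1" "0 < a2" "1 \<le> K" "comparable K a1 a2"
  shows "comparable (K * K ^ 3) (pfun m a1 l / a1) (pfun m a2 l / a2)"
proof -
  have eq: "pfun m a l / a = qfun m a l / a ^ 3 * (m / 2)" if "0 < a" for a
    using pfun_eq[OF that] that unfolding bfun_def
    by (simp add: field_simps power2_eq_square power3_eq_cube)
  from comparable_divide[OF qfun_comparable[OF assms] comparable_power[OF assms(4), of 3]]
  have "comparable (K * K ^ 3) (qfun m a1 l / a1 ^ 3) (qfun m a2 l / a2 ^ 3)"
    using assms(1,2) qfun_gt_1[OF assms(1)] qfun_gt_1[OF assms(2)] by simp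
  from comparable_scale[OF this, of "m / 2"] show ?thesis
    unfolding eq[OF assms(1)] eq[OF assms(2)] using m by simp
qed

lemma kappa_comparable:
  assumes "0 < a1" "0 < a2" "1 \<le> K" "comparable K a1 a2"
  shows "comparable K (kappa m a1 l) (kappa m a2 l)"
  using comparable_divide[OF comparable_refl[of 1 1] qfun_comparable[OF assms]]
    qfun_gt_1[OF assms(1)] qfun_gt_1[OF assms(2)]
  unfolding kappa_eq by simp

lemma one_minus_kappa_comparable:
  assumes "0 < a1" "0 < a2" "1 \<le> K" "comparable K a1 a2"
  shows "comparable (K\<^sup>2 * (K * K)) (1 - kappa m a1 l) (1 - kappa m a2 l)"
proof -
  have eq: "1 - kappa m a l = a\<^sup>2 / (qfun m a l * (qfun m a l + 1)) * (4 * l / m\<^sup>2)"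
    if "0 < a" for a
  proof -
    have "(qfun m a l)\<^sup>2 - 1 = (qfun m a l - 1) * (qfun m a l + 1)"
      by (simp add: algebra_simps power2_eq_square)
    then have "((qfun m a l)\<^sup>2 - 1) / (qfun m a l * (qfun m a l + 1)) = 1 - kappa m a l"
      unfolding kappa_eq using qfun_gt_1[OF that] by (simp add: diff_divide_distrib)
    then show ?thesis unfolding qfun_squared by (simp add: field_simps)
  qed
  note q = qfun_comparable[OF assms]
  have "comparable K (qfun m a1 l + 1) (qfun m a2 l + 1)"
    using comparable_add[OF q comparable_refl[OF assms(3), of 1]] by simp
  from comparable_mult[OF q this]
  have "comparable (K * K) (qfun m a1 l * (qfun m a1 l + 1)) (qfun m a2 l * (qfun m a2 l + 1))"
    using qfun_gt_1[OF assms(1)] qfun_gt_1[OF assms(2)] by simp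
  from comparable_divide[OF comparable_power[OF assms(4), of 2] this]
  have "comparable (K\<^sup>2 * (K * K)) (a1\<^sup>2 / (qfun m a1 l * (qfun m a1 l + 1)))
      (a2\<^sup>2 / (qfun m a2 l * (qfun m a2 l + 1)))"
    using assms(1,2) qfun_gt_1[OF assms(1)] qfun_gt_1[OF assms(2)] by simp
  from comparable_scale[OF this, of "4 * l / m\<^sup>2"] show ?thesis
    unfolding eq[OF assms(1)] eq[OF assms(2)] using l by simp
qed

lemma pfun_minus_bfun_eq: "0 < a \<Longrightarrow> pfun m a l - bfun m a = (2 * l / m) / (qfun m a l + 1)"
proof -
  assume "0 < a"
  have "(qfun m a l + 1) * (pfun m a l - bfun m a) = bfun m a * ((qfun m a l)\<^sup>2 - 1)"
    unfolding pfun_eq[OF \<open>0 < a\<close>] by (simp add: algebra_simps power2_eq_square)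
  also have "\<dots> = 2 * l / m"
    unfolding qfun_squared bfun_def using m \<open>0 < a\<close> by (simp add: field_simps power2_eq_square)
  finally have "(qfun m a l + 1) * (pfun m a l - bfun m a) = 2 * l / m" .
  moreover have "qfun m a l + 1 \<noteq> 0" using qfun_gt_1[OF \<open>0 < a\<close>] by simp
  ultimately show ?thesis by (metis nonzero_mult_div_cancel_left)
qed

lemma pfun_sinh_minus_bfun_comparison:
  assumes "0 < a1" "a1 \<le> a2" "a2 \<le> K * a1" "1 \<le> K" "0 \<le> t"
  shows "pfun m a2 l * sinh t - bfun m a2 * t \<le> pfun m a1 l * sinh t - bfun m a1 * t"
    and "comparable (K\<^sup>2)
      (pfun m a1 l * sinh t - bfun m a1 * t) (pfun m a2 l * sinh t - bfun m a2 * t)"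
proof -
  have "0 < a2" using assms(1,2) by simp
  have comp_a: "comparable K a1 a2" using assms by (intro comparable_if_le) simp_all
  have split: "pfun m a l * sinh t - bfun m a * t
      = (2 * l / m) / (qfun m a l + 1) * sinh t + bfun m a * (sinh t - t)" if "0 < a" for a
    unfolding pfun_minus_bfun_eq[OF that, symmetric] by (simp add: algebra_simps)
  have "0 \<le> sinh t" "0 \<le> sinh t - t" using assms(5) sinh_ge_self[OF assms(5)] by simp_all
  have E_le: "(2 * l / m) / (qfun m a2 l + 1) \<le> (2 * l / m) / (qfun m a1 l + 1)"
    using qfun_mono[OF assms(1,2)] qfun_gt_1[OF assms(1)] m l by (intro divide_left_mono) auto
  have B_le: "bfun m a2 \<le> bfun m a1"
    unfolding bfun_def using assms(1,2) m by (intro divide_left_mono mult_left_mono power_mono) auto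
  show "pfun m a2 l * sinh t - bfun m a2 * t \<le> pfun m a1 l * sinh t - bfun m a1 * t"
    unfolding split[OF assms(1)] split[OF \<open>0 < a2\<close>]
    using mult_right_mono[OF E_le \<open>0 \<le> sinh t\<close>] mult_right_mono[OF B_le \<open>0 \<le> sinh t - t\<close>]
    by linarith
  have "comparable K (qfun m a1 l + 1) (qfun m a2 l + 1)"
    using comparable_add[OF qfun_comparable[OF assms(1) \<open>0 < a2\<close> assms(4) comp_a]
        comparable_refl[OF assms(4), of 1]] by simp
  from comparable_divide[OF comparable_refl[of 1 "2 * l / m"] this]
  have "comparable K ((2 * l / m) / (qfun m a1 l + 1)) ((2 * l / m) / (qfun m a2 l + 1))"
    using qfun_gt_1[OF assms(1)] qfun_gt_1[OF \<open>0 < a2\<close>] m l by simp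
  moreover have "K \<le> K\<^sup>2"
    using mult_right_mono[OF assms(4), of K] assms(4) by (simp add: power2_eq_square)
  ultimately have "comparable (K\<^sup>2)
      ((2 * l / m) / (qfun m a1 l + 1)) ((2 * l / m) / (qfun m a2 l + 1))"
    by (rule comparable_mono) (use qfun_gt_1[OF assms(1)] qfun_gt_1[OF \<open>0 < a2\<close>] m l in auto)
  from comparable_scale[OF this \<open>0 \<le> sinh t\<close>]
  have E: "comparable (K\<^sup>2)
      ((2 * l / m) / (qfun m a1 l + 1) * sinh t) ((2 * l / m) / (qfun m a2 l + 1) * sinh t)" .
  from comparable_divide[OF comparable_refl[of 1 "m / 2"] comparable_power[OF comp_a, of 2]]
  have "comparable (K\<^sup>2) (bfun m a1) (bfun m a2)"
    unfolding bfun_def using assms(1) \<open>0 < a2\<close> m by simp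
  from comparable_add[OF E comparable_scale[OF this \<open>0 \<le> sinh t - t\<close>]]
  show "comparable (K\<^sup>2)
      (pfun m a1 l * sinh t - bfun m a1 * t) (pfun m a2 l * sinh t - bfun m a2 * t)"
    unfolding split[OF assms(1)] split[OF \<open>0 < a2\<close>] by (simp add: ac_simps)
qed

lemma Tfun_comparison:
  assumes "0 < a1" "a1 \<le> a2" "a2 \<le> K * a1" "1 \<le> K"
  shows "Tfun m \<theta> a1 l \<le> Tfun m \<theta> a2 l"
    and "Phik (kappa m a1 l) (Tfun m \<theta> a2 l) \<le> K\<^sup>2 * Phik (kappa m a1 l) (Tfun m \<theta> a1 l)"
proof -
  have "0 < a2" using assms(1,2) by simp
  define k T1 T2 where "k = kappa m a1 l" and "T1 = Tfun m \<theta> a1 l" and "T2 = Tfun m \<theta> a2 l"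
  have p: "0 < pfun m a1 l" using pfun_pos[OF assms(1)] .
  have T1: "pfun m a1 l * Phik k T1 = \<bar>\<theta>\<bar>"
    unfolding k_def T1_def pfun_mult_Phik[OF assms(1)] using Tfun_root(2)[OF assms(1)] .
  have T2: "pfun m a2 l * sinh T2 - bfun m a2 * T2 = \<bar>\<theta>\<bar>"
    unfolding T2_def using Tfun_root(2)[OF \<open>0 < a2\<close>] .
  note psi = pfun_sinh_minus_bfun_comparison[OF assms Tfun_root(1)[OF \<open>0 < a2\<close>], of \<theta>,
      folded T2_def, unfolded T2 pfun_mult_Phik[OF assms(1), symmetric] k_def [symmetric]]
  have "pfun m a1 l * Phik k T1 \<le> pfun m a1 l * Phik k T2"
    using psi(1) T1 by simp
  then have "Phik k T1 \<le> Phik k T2" using p by simp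
  then show "Tfun m \<theta> a1 l \<le> Tfun m \<theta> a2 l"
    using strict_mono_Phik[OF kappa_pos_lt_1(2)[OF assms(1)]] unfolding k_def T1_def T2_def
    by (simp add: strict_mono_less_eq)
  have "pfun m a1 l * Phik k T2 \<le> pfun m a1 l * (K\<^sup>2 * Phik k T1)"
    using psi(2) unfolding comparable_def T1 [symmetric] by (simp add: ac_simps)
  then show "Phik (kappa m a1 l) (Tfun m \<theta> a2 l) \<le> K\<^sup>2 * Phik (kappa m a1 l) (Tfun m \<theta> a1 l)"
    using p unfolding k_def T1_def T2_def by simp
qed

lemma Rfun_strict_antimono:
  assumes "0 < a1" "a1 < a2"
  shows "Rfun m \<theta> a2 l < Rfun m \<theta> a1 l"
proof (rule DERIV_neg_imp_decreasing[OF assms(2)])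
  fix a assume "a1 \<le> a"
  then have "0 < a" using assms(1) by simp
  have "0 < pfun m a l / a * Qk (kappa m a l) (Tfun m \<theta> a l)"
    using pfun_pos[OF \<open>0 < a\<close>] \<open>0 < a\<close>
      Qk_pos[OF kappa_pos_lt_1[OF \<open>0 < a\<close>] Tfun_root(1)[OF \<open>0 < a\<close>]]
    by simp
  then show "\<exists>y. ((\<lambda>b. Rfun m \<theta> b l) has_real_derivative y) (at a) \<and> y < 0"
    using Rfun_has_real_derivative[OF \<open>0 < a\<close>] by (intro exI conjI) auto
qed

lemma abs_deriv_Rfun_comparable:
  assumes "0 < a1" "a1 \<le> a2" "a2 \<le> K * a1" "1 \<le> K"
  shows "comparable (2 * K ^ 38) \<bar>deriv (\<lambda>b. Rfun m \<theta> b l) a1\<bar> \<bar>deriv (\<lambda>b. Rfun m \<theta> b l) a2\<bar>"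
proof -
  have "0 < a2" using assms(1,2) by simp
  have comp_a: "comparable K a1 a2" using assms by (intro comparable_if_le) simp_all
  define k1 k2 T1 T2 where "k1 = kappa m a1 l" and "k2 = kappa m a2 l"
    and "T1 = Tfun m \<theta> a1 l" and "T2 = Tfun m \<theta> a2 l"
  note k1 = kappa_pos_lt_1[OF assms(1), folded k1_def]
  note k2 = kappa_pos_lt_1[OF \<open>0 < a2\<close>, folded k2_def]
  have "0 \<le> T1" "0 \<le> T2" unfolding T1_def T2_def using Tfun_root(1) assms(1) \<open>0 < a2\<close> by auto
  have "1 \<le> K\<^sup>2" by (rule one_le_power[OF assms(4)])
  have "K \<le> K ^ 4" using power_increasing[of 1 4 K] assms(4) by simp
  have "K\<^sup>2 * (K * K) = K ^ 4" by algebra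
  note T_comp = Tfun_comparison[OF assms, of \<theta>, folded k1_def T1_def T2_def]
  have QT: "comparable ((K\<^sup>2) ^ 8 * K\<^sup>2) (Qk k1 T1) (Qk k1 T2)"
    using Qk_comparable_in_t[OF k1 \<open>0 \<le> T1\<close> T_comp(1) \<open>1 \<le> K\<^sup>2\<close> T_comp(2)] .
  have "comparable (K ^ 4) k1 k2"
    using comparable_mono[OF kappa_comparable[OF assms(1) \<open>0 < a2\<close> assms(4) comp_a] \<open>K \<le> K ^ 4\<close>]
      k1 k2 unfolding k1_def k2_def by simp
  moreover have "comparable (K ^ 4) (1 - k1) (1 - k2)"
    using one_minus_kappa_comparable[OF assms(1) \<open>0 < a2\<close> assms(4) comp_a]
    unfolding k1_def k2_def \<open>K\<^sup>2 * (K * K) = K ^ 4\<close> .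
  ultimately have QK: "comparable (2 * (K ^ 4) ^ 3 * K ^ 4) (Qk k1 T2) (Qk k2 T2)"
    by (rule Qk_comparable_in_k[OF k1 k2 \<open>0 \<le> T2\<close> one_le_power[OF assms(4)]])
  from comparable_mult[OF prefactor_comparable[OF assms(1) \<open>0 < a2\<close> assms(4) comp_a]
      comparable_trans[OF QT QK]]
  have "comparable (K * K ^ 3 * ((K\<^sup>2) ^ 8 * K\<^sup>2 * (2 * (K ^ 4) ^ 3 * K ^ 4)))
      (pfun m a1 l / a1 * Qk k1 T1) (pfun m a2 l / a2 * Qk k2 T2)"
    using pfun_pos[OF assms(1)] pfun_pos[OF \<open>0 < a2\<close>] assms(1) \<open>0 < a2\<close>
      Qk_pos[OF k1 \<open>0 \<le> T1\<close>] Qk_pos[OF k2 \<open>0 \<le> T2\<close>] assms(4)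
    by simp
  moreover have "K * K ^ 3 * ((K\<^sup>2) ^ 8 * K\<^sup>2 * (2 * (K ^ 4) ^ 3 * K ^ 4)) = 2 * K ^ 38"
    by algebra
  ultimately show ?thesis
    unfolding abs_deriv_Rfun[OF assms(1)] abs_deriv_Rfun[OF \<open>0 < a2\<close>]
    by (simp only: k1_def k2_def T1_def T2_def)
qed

lemma abs_deriv_Rfun_SUP_le_INF:
  assumes "1 \<le> C0" "0 < a"
  shows "(SUP \<alpha>\<in>{a / C0 .. C0 * a}. \<bar>deriv (\<lambda>b. Rfun m \<theta> b l) \<alpha>\<bar>)
      \<le> 2 * (C0\<^sup>2) ^ 38 * (INF \<alpha>\<in>{a / C0 .. C0 * a}. \<bar>deriv (\<lambda>b. Rfun m \<theta> b l) \<alpha>\<bar>)"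
proof (rule SUP_le_mult_INF)
  show "{a / C0 .. C0 * a} \<noteq> {}"
    using assms mult_right_mono[of 1 C0 a] by (auto simp: divide_le_eq intro: order_trans)
  show "0 < 2 * (C0\<^sup>2) ^ 38" using assms(1) by simp
  have "1 \<le> C0\<^sup>2" using assms(1) by (simp add: one_le_power)
  fix x y assume "x \<in> {a / C0 .. C0 * a}" "y \<in> {a / C0 .. C0 * a}"
  then have "a \<le> C0 * x" "x \<le> C0 * a" "a \<le> C0 * y" "y \<le> C0 * a"
    using assms by (auto simp: field_simps)
  then have "0 < x" "0 < y"
    using assms mult_nonneg_nonpos[of C0 x] mult_nonneg_nonpos[of C0 y] by (smt (verit))+
  have "C0 * a \<le> C0 * (C0 * y)" "C0 * a \<le> C0 * (C0 * x)"
    using \<open>a \<le> C0 * x\<close> \<open>a \<le> C0 * y\<close> assms(1) by (auto intro!: mult_left_mono)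
  then have "x \<le> C0\<^sup>2 * y" "y \<le> C0\<^sup>2 * x"
    using \<open>x \<le> C0 * a\<close> \<open>y \<le> C0 * a\<close> by (simp_all add: power2_eq_square mult.assoc)
  have "comparable (2 * (C0\<^sup>2) ^ 38) \<bar>deriv (\<lambda>b. Rfun m \<theta> b l) x\<bar> \<bar>deriv (\<lambda>b. Rfun m \<theta> b l) y\<bar>"
  proof (cases "x \<le> y")
    case True
    show ?thesis
      using abs_deriv_Rfun_comparable[OF \<open>0 < x\<close> True \<open>y \<le> C0\<^sup>2 * x\<close> \<open>1 \<le> C0\<^sup>2\<close>] .
  next
    case False
    then have "y \<le> x" by simp
    show ?thesis
      using abs_deriv_Rfun_comparable[OF \<open>0 < y\<close> \<open>y \<le> x\<close> \<open>x \<le> C0\<^sup>2 * y\<close> \<open>1 \<le> C0\<^sup>2\<close>]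
      by (rule comparable_sym)
  qed
  then show "\<bar>deriv (\<lambda>b. Rfun m \<theta> b l) x\<bar> \<le> 2 * (C0\<^sup>2) ^ 38 * \<bar>deriv (\<lambda>b. Rfun m \<theta> b l) y\<bar>"
    unfolding comparable_def by blast
qed

end

theorem lemma2p17:
  fixes m :: real
  assumes "m > 0"
  shows "(\<forall>\<theta> l a1 a2. l > 0 \<longrightarrow> 0 < a1 \<longrightarrow> a1 < a2 \<longrightarrow> Rfun m \<theta> a2 l < Rfun m \<theta> a1 l)
       \<and> (\<forall>C0::real. C0 \<ge> 1 \<longrightarrow> (\<exists>C::real. C \<ge> 1 \<and>
           (\<forall>\<theta> a l. a > 0 \<longrightarrow> l > 0 \<longrightarrow>
              (SUP \<alpha>\<in>{a / C0 .. C0 * a}. \<bar>deriv (\<lambda>b. Rfun m \<theta> b l) \<alpha>\<bar>)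
                \<le> C * (INF \<alpha>\<in>{a / C0 .. C0 * a}. \<bar>deriv (\<lambda>b. Rfun m \<theta> b l) \<alpha>\<bar>))))"
proof (intro conjI allI impI)
  fix \<theta> l a1 a2 :: real
  assume "l > 0" "0 < a1" "a1 < a2"
  then show "Rfun m \<theta> a2 l < Rfun m \<theta> a1 l"
    using Rfun_strict_antimono[OF assms] by blast
next
  fix C0 :: real
  assume "C0 \<ge> 1"
  show "\<exists>C\<ge>1. \<forall>\<theta> a l. a > 0 \<longrightarrow> l > 0 \<longrightarrow>
      (SUP \<alpha>\<in>{a / C0 .. C0 * a}. \<bar>deriv (\<lambda>b. Rfun m \<theta> b l) \<alpha>\<bar>)
        \<le> C * (INF \<alpha>\<in>{a / C0 .. C0 * a}. \<bar>deriv (\<lambda>b. Rfun m \<theta> b l) \<alpha>\<bar>)"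
  proof (intro exI[of _ "2 * (C0\<^sup>2) ^ 38"] conjI allI impI)
    show "1 \<le> 2 * (C0\<^sup>2) ^ 38"
      using one_le_power[OF one_le_power[OF \<open>C0 \<ge> 1\<close>, of 2], of 38] by simp
    fix \<theta> a l :: real
    assume "a > 0" "l > 0"
    then show "(SUP \<alpha>\<in>{a / C0 .. C0 * a}. \<bar>deriv (\<lambda>b. Rfun m \<theta> b l) \<alpha>\<bar>)
        \<le> 2 * (C0\<^sup>2) ^ 38 * (INF \<alpha>\<in>{a / C0 .. C0 * a}. \<bar>deriv (\<lambda>b. Rfun m \<theta> b l) \<alpha>\<bar>)"
      using abs_deriv_Rfun_SUP_le_INF[OF assms] \<open>C0 \<ge> 1\<close> by blast
  qed
qed

end
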